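(* Let $p\in(1,\infty)$ and $q=\frac{p}{p-1}$. Let $G=(V,E)$ be a connected graph and let $A,B\subseteq V$ be non-empty disjoint subsets. Let $\widehat G=(\widehat V,\widehat E)$ be the graph with $\widehat V=V\cup\{v_x: x\in A\cup B\}$ (new formal vertices, one for each $x\in A\cup B$) and $\widehat E=E\cup\{\{v_x,x\}: x\in A\cup B\}$, and put $\widehat A=\{v_x:x\in A\}$, $\widehat B=\{v_x: x\in B\}$. There is a constant $C\ge 1$, depending only on $\deg(G)$ and continuously on $p\in(1,\infty)$, such that whenever $F$ is a unit flow from $A$ to $B$ in $G$ and $\widehat F$ is the unit flow from $\widehat A$ to $\widehat B$ in $\widehat G$ obtained by extending $F$ via \[ \widehat F(v_x,x):=\operatorname{div}(F)(x)=\sum_{\{x,y\}\in E}F(x,y)\quad (x\in A\cup B), \] (and $\widehat F(x,v_x)=-\widehat F(v_x,x)$), then \[ \mathcal E_q(\widehat F)\le C\cdot \mathcal E_q(F). \] Furthermore, $C$ can be chosen so that $C^{-p/q}$ is continuous in $p\in[1,\infty)$ (i.e. extends continuously to $p=1$).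
   Context: A graph is a pair $G=(V,E)$ with $V$ a finite non-empty set and $E\subseteq V\times V$ such that $(x,y)\in E$ implies $(y,x)\notin E$ (in particular there are no loops); we write $\{x,y\}\in E$ if $(x,y)\in E$ or $(y,x)\in E$. Paths and connectedness are taken in the underlying undirected graph. The degree of a vertex is the number of $y$ with $\{x,y\}\in E$, and $\deg(G)$ is the maximal degree. A function $F:V\times V\to\mathbb R$ is antisymmetric if $F(x,y)=-F(y,x)$ for all $x,y$ and $F(x,y)=0$ unless $\{x,y\}\in E$. Its divergence is $\operatorname{div}(F)(x)=\sum_{\{x,y\}\in E}F(x,y)$. For disjoint non-empty $A,B\subseteq V$, an antisymmetric $F$ is a flow from $A$ to $B$ if $\operatorname{div}(F)(x)=0$ for all $x\notin A\cup B$; its total flow is $I(F)=\sum_{x\in A}\operatorname{div}(F)(x)$, and it is a unit flow if $I(F)=1$. The $q$-energy of $F$ is $\mathcal E_q(F)=\sum_{\{x,y\}\in E}|F(x,y)|^q$, each unordered edge counted once. *)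

theory Defs
  imports "HOL-Analysis.Analysis"
begin

definition is_graph :: "'a set \<Rightarrow> ('a \<times> 'a) set \<Rightarrow> bool" where
  "is_graph V E \<longleftrightarrow> finite V \<and> V \<noteq> {} \<and> E \<subseteq> V \<times> V \<and>
     (\<forall>x y. (x, y) \<in> E \<longrightarrow> (y, x) \<notin> E)"

definition adj :: "('a \<times> 'a) set \<Rightarrow> 'a \<Rightarrow> 'a \<Rightarrow> bool" where
  "adj E x y \<longleftrightarrow> (x, y) \<in> E \<or> (y, x) \<in> E"

definition graph_connected :: "'a set \<Rightarrow> ('a \<times> 'a) set \<Rightarrow> bool" where
  "graph_connected V E \<longleftrightarrow> (\<forall>x\<in>V. \<forall>y\<in>V. (x, y) \<in> (E \<union> E\<inverse>)\<^sup>*)"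

definition vdegree :: "'a set \<Rightarrow> ('a \<times> 'a) set \<Rightarrow> 'a \<Rightarrow> nat" where
  "vdegree V E x = card {y \<in> V. adj E x y}"

definition max_degree :: "'a set \<Rightarrow> ('a \<times> 'a) set \<Rightarrow> nat" where
  "max_degree V E = Max (vdegree V E ` V)"

definition antisym_fun :: "('a \<times> 'a) set \<Rightarrow> ('a \<Rightarrow> 'a \<Rightarrow> real) \<Rightarrow> bool" where
  "antisym_fun E F \<longleftrightarrow> (\<forall>x y. F x y = - F y x) \<and> (\<forall>x y. \<not> adj E x y \<longrightarrow> F x y = 0)"

definition divg :: "'a set \<Rightarrow> ('a \<times> 'a) set \<Rightarrow> ('a \<Rightarrow> 'a \<Rightarrow> real) \<Rightarrow> 'a \<Rightarrow> real" where
  "divg V E F x = (\<Sum>y\<in>{y \<in> V. adj E x y}. F x y)"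

definition is_flow :: "'a set \<Rightarrow> ('a \<times> 'a) set \<Rightarrow> 'a set \<Rightarrow> 'a set \<Rightarrow> ('a \<Rightarrow> 'a \<Rightarrow> real) \<Rightarrow> bool" where
  "is_flow V E A B F \<longleftrightarrow> antisym_fun E F \<and> (\<forall>x\<in>V - (A \<union> B). divg V E F x = 0)"

definition total_flow :: "'a set \<Rightarrow> ('a \<times> 'a) set \<Rightarrow> 'a set \<Rightarrow> ('a \<Rightarrow> 'a \<Rightarrow> real) \<Rightarrow> real" where
  "total_flow V E A F = (\<Sum>x\<in>A. divg V E F x)"

definition is_unit_flow :: "'a set \<Rightarrow> ('a \<times> 'a) set \<Rightarrow> 'a set \<Rightarrow> 'a set \<Rightarrow> ('a \<Rightarrow> 'a \<Rightarrow> real) \<Rightarrow> bool" where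
  "is_unit_flow V E A B F \<longleftrightarrow> is_flow V E A B F \<and> total_flow V E A F = 1"

text \<open>q-energy: each unordered edge counted once (E contains exactly one orientation).\<close>
definition energy :: "real \<Rightarrow> ('a \<times> 'a) set \<Rightarrow> ('a \<Rightarrow> 'a \<Rightarrow> real) \<Rightarrow> real" where
  "energy q E F = (\<Sum>(x, y)\<in>E. \<bar>F x y\<bar> powr q)"

text \<open>The extended graph: Inl x is the original vertex x, Inr x is the new vertex v_x.\<close>
definition hatV :: "'a set \<Rightarrow> 'a set \<Rightarrow> 'a set \<Rightarrow> ('a + 'a) set" where
  "hatV V A B = Inl ` V \<union> Inr ` (A \<union> B)"

definition hatE :: "('a \<times> 'a) set \<Rightarrow> 'a set \<Rightarrow> 'a set \<Rightarrow> (('a + 'a) \<times> ('a + 'a)) set" where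
  "hatE E A B = (\<lambda>(x, y). (Inl x, Inl y)) ` E \<union> (\<lambda>x. (Inr x, Inl x)) ` (A \<union> B)"

definition hatF :: "'a set \<Rightarrow> ('a \<times> 'a) set \<Rightarrow> 'a set \<Rightarrow> 'a set \<Rightarrow> ('a \<Rightarrow> 'a \<Rightarrow> real)
    \<Rightarrow> ('a + 'a) \<Rightarrow> ('a + 'a) \<Rightarrow> real" where
  "hatF V E A B F u w =
     (case (u, w) of
        (Inl x, Inl y) \<Rightarrow> F x y
      | (Inr x, Inl y) \<Rightarrow> (if x = y \<and> x \<in> A \<union> B then divg V E F x else 0)
      | (Inl x, Inr y) \<Rightarrow> (if x = y \<and> x \<in> A \<union> B then - divg V E F x else 0)
      | (Inr x, Inr y) \<Rightarrow> 0)"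

end

theory Submission
  imports Defs
begin

text \<open>The extension only adds the edges \<open>{v\<^sub>x, x}\<close>, which carry \<open>div F x\<close>. Bounding
  each of the at most \<open>d\<close> terms of \<open>div F x\<close> by \<open>(\<Sum>\<^sub>y \<bar>F x y\<bar>\<^sup>q) powr (1/q)\<close> gives
  \<open>\<bar>div F x\<bar>\<^sup>q \<le> d\<^sup>q \<Sum>\<^sub>y \<bar>F x y\<bar>\<^sup>q\<close>, and summing over all vertices counts every edge
  twice, so the new energy is at most \<open>(1 + 2 d\<^sup>q)\<close> times the old one, hence at most
  \<open>C = 3 (d + 1)\<^sup>q\<close> times it. For \<open>q = p/(p-1)\<close> one has \<open>C powr (-p/q) = 3 powr (1-p) * (d+1) powr (-p)\<close>,
  which is continuous down to \<open>p = 1\<close>.\<close>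

lemma finite_edges:
  assumes "is_graph V E"
  shows "finite E"
  using assms unfolding is_graph_def by (meson finite_SigmaI finite_subset)

lemma vdegree_le_max_degree:
  assumes "finite V" and "x \<in> V"
  shows "vdegree V E x \<le> max_degree V E"
  using assms unfolding max_degree_def by simp

lemma sum_neighbours_eq_double_sum_edges:
  fixes h :: "'a \<Rightarrow> 'a \<Rightarrow> real"
  assumes g: "is_graph V E" and sym: "\<And>x y. h x y = h y x"
  shows "(\<Sum>x\<in>V. \<Sum>y\<in>{y \<in> V. adj E x y}. h x y) = 2 * (\<Sum>(x, y)\<in>E. h x y)"
proof -
  have fV: "finite V" and EV: "E \<subseteq> V \<times> V" and asym: "\<And>x y. (x, y) \<in> E \<Longrightarrow> (y, x) \<notin> E"
    using g unfolding is_graph_def by auto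
  have "(\<Sum>x\<in>V. \<Sum>y\<in>{y \<in> V. adj E x y}. h x y) = (\<Sum>(x, y)\<in>(SIGMA x:V. {y \<in> V. adj E x y}). h x y)"
    by (rule sum.Sigma) (use fV in auto)
  also have "(SIGMA x:V. {y \<in> V. adj E x y}) = E \<union> prod.swap ` E"
    using EV unfolding adj_def by auto
  also have "(\<Sum>(x, y)\<in>E \<union> prod.swap ` E. h x y) = (\<Sum>(x, y)\<in>E. h x y) + (\<Sum>(x, y)\<in>prod.swap ` E. h x y)"
    by (rule sum.union_disjoint) (use finite_edges[OF g] asym in auto)
  also have "(\<Sum>(x, y)\<in>prod.swap ` E. h x y) = (\<Sum>(x, y)\<in>E. h x y)"
    by (subst sum.reindex) (auto simp: case_prod_beta sym)
  finally show ?thesis by simp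
qed

lemma abs_sum_powr_le:
  fixes f :: "'a \<Rightarrow> real"
  assumes q: "q > 0" and "finite N"
  shows "\<bar>\<Sum>y\<in>N. f y\<bar> powr q \<le> real (card N) powr q * (\<Sum>y\<in>N. \<bar>f y\<bar> powr q)"
proof -
  define S where "S = (\<Sum>y\<in>N. \<bar>f y\<bar> powr q)"
  have "S \<ge> 0" unfolding S_def by (auto intro: sum_nonneg)
  have term_le: "\<bar>f y\<bar> \<le> S powr (1/q)" if "y \<in> N" for y
  proof -
    have "\<bar>f y\<bar> powr q \<le> S"
      unfolding S_def by (rule member_le_sum) (use that \<open>finite N\<close> in auto)
    then have "(\<bar>f y\<bar> powr q) powr (1/q) \<le> S powr (1/q)"
      using q by (intro powr_mono2) auto
    then show ?thesis using q by (simp add: powr_powr)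
  qed
  have "\<bar>\<Sum>y\<in>N. f y\<bar> \<le> (\<Sum>y\<in>N. \<bar>f y\<bar>)" by (rule sum_abs)
  also have "\<dots> \<le> real (card N) * S powr (1/q)"
    by (rule sum_bounded_above) (use term_le in auto)
  finally have "\<bar>\<Sum>y\<in>N. f y\<bar> powr q \<le> (real (card N) * S powr (1/q)) powr q"
    using q by (intro powr_mono2) auto
  also have "\<dots> = real (card N) powr q * S"
    using q \<open>S \<ge> 0\<close> by (simp add: powr_mult powr_powr)
  finally show ?thesis unfolding S_def .
qed

lemma abs_divg_powr_le:
  assumes "q > 0" and "finite V"
  shows "\<bar>divg V E F x\<bar> powr q
           \<le> real (vdegree V E x) powr q * (\<Sum>y\<in>{y \<in> V. adj E x y}. \<bar>F x y\<bar> powr q)"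
  unfolding divg_def vdegree_def by (rule abs_sum_powr_le) (use assms in auto)

lemma sum_abs_divg_powr_le:
  assumes g: "is_graph V E" and F: "antisym_fun E F" and q: "q > 0"
  shows "(\<Sum>x\<in>V. \<bar>divg V E F x\<bar> powr q) \<le> 2 * real (max_degree V E) powr q * energy q E F"
proof -
  have fV: "finite V" using g unfolding is_graph_def by simp
  define D where "D = real (max_degree V E) powr q"
  have "\<bar>divg V E F x\<bar> powr q \<le> D * (\<Sum>y\<in>{y \<in> V. adj E x y}. \<bar>F x y\<bar> powr q)" if "x \<in> V" for x
  proof -
    have "real (vdegree V E x) powr q \<le> D"
      unfolding D_def using vdegree_le_max_degree[OF fV that] q by (intro powr_mono2) auto
    then show ?thesis
      using abs_divg_powr_le[OF q fV, of E F x] by (meson order_trans mult_right_mono sum_nonneg powr_ge_zero)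
  qed
  then have "(\<Sum>x\<in>V. \<bar>divg V E F x\<bar> powr q) \<le> D * (\<Sum>x\<in>V. \<Sum>y\<in>{y \<in> V. adj E x y}. \<bar>F x y\<bar> powr q)"
    unfolding sum_distrib_left by (rule sum_mono)
  also have "\<dots> = D * (2 * energy q E F)"
  proof -
    have "\<bar>F x y\<bar> powr q = \<bar>F y x\<bar> powr q" for x y
      using F unfolding antisym_fun_def by (metis abs_minus_cancel)
    then show ?thesis
      unfolding energy_def by (subst sum_neighbours_eq_double_sum_edges[OF g]) auto
  qed
  finally show ?thesis unfolding D_def by simp
qed

lemma energy_hatF_eq:
  assumes g: "is_graph V E" and AB: "A \<union> B \<subseteq> V"
  shows "energy q (hatE E A B) (hatF V E A B F) = energy q E F + (\<Sum>x\<in>A \<union> B. \<bar>divg V E F x\<bar> powr q)"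
proof -
  have fAB: "finite (A \<union> B)" using g AB unfolding is_graph_def by (meson finite_subset)
  let ?h = "\<lambda>(u, w). \<bar>hatF V E A B F u w\<bar> powr q"
  have "energy q (hatE E A B) (hatF V E A B F)
          = sum ?h ((\<lambda>(x, y). (Inl x, Inl y)) ` E) + sum ?h ((\<lambda>x. (Inr x, Inl x)) ` (A \<union> B))"
    unfolding energy_def hatE_def by (rule sum.union_disjoint) (use finite_edges[OF g] fAB in auto)
  also have "sum ?h ((\<lambda>(x, y). (Inl x, Inl y)) ` E) = energy q E F"
    unfolding energy_def by (subst sum.reindex) (auto simp: inj_on_def hatF_def intro!: sum.cong)
  also have "sum ?h ((\<lambda>x. (Inr x, Inl x)) ` (A \<union> B)) = (\<Sum>x\<in>A \<union> B. \<bar>divg V E F x\<bar> powr q)"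
    by (subst sum.reindex) (auto simp: inj_on_def hatF_def intro!: sum.cong)
  finally show ?thesis .
qed

lemma energy_hatF_le:
  assumes g: "is_graph V E" and F: "antisym_fun E F" and AB: "A \<union> B \<subseteq> V" and q: "q > 0"
  shows "energy q (hatE E A B) (hatF V E A B F) \<le> (1 + 2 * real (max_degree V E) powr q) * energy q E F"
proof -
  have "finite V" using g unfolding is_graph_def by simp
  have "(\<Sum>x\<in>A \<union> B. \<bar>divg V E F x\<bar> powr q) \<le> (\<Sum>x\<in>V. \<bar>divg V E F x\<bar> powr q)"
    by (rule sum_mono2) (use \<open>finite V\<close> AB in auto)
  also have "\<dots> \<le> 2 * real (max_degree V E) powr q * energy q E F"
    by (rule sum_abs_divg_powr_le[OF g F q])
  finally show ?thesis
    unfolding energy_hatF_eq[OF g AB] by (simp add: algebra_simps)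
qed

definition flow_extension_const :: "nat \<Rightarrow> real \<Rightarrow> real" where
  "flow_extension_const d p = 3 * (real d + 1) powr (p / (p - 1))"

lemma flow_extension_const_ge_one:
  assumes "p > 1"
  shows "flow_extension_const d p \<ge> 1"
proof -
  have "(real d + 1) powr (p / (p - 1)) \<ge> 1"
    using assms by (intro ge_one_powr_ge_zero) auto
  then show ?thesis unfolding flow_extension_const_def by simp
qed

lemma continuous_on_flow_extension_const: "continuous_on {1<..} (flow_extension_const d)"
  unfolding flow_extension_const_def by (intro continuous_intros) auto

lemma flow_extension_const_powr_conjugate:
  assumes "p > 1"
  shows "flow_extension_const d p powr (- (p / (p / (p - 1)))) = 3 powr (1 - p) * (real d + 1) powr (- p)"
proof -
  have "- (p / (p / (p - 1))) = 1 - p" and "p / (p - 1) * (1 - p) = - p"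
    using assms by (simp_all add: field_simps)
  then show ?thesis
    unfolding flow_extension_const_def by (simp add: powr_mult powr_powr)
qed

lemma energy_hatF_le_flow_extension_const:
  assumes g: "is_graph V E" and F: "antisym_fun E F" and AB: "A \<union> B \<subseteq> V" and p: "p > 1"
  shows "energy (p / (p - 1)) (hatE E A B) (hatF V E A B F)
           \<le> flow_extension_const (max_degree V E) p * energy (p / (p - 1)) E F"
proof -
  define q where "q = p / (p - 1)"
  define d where "d = real (max_degree V E)"
  have "q > 0" using p unfolding q_def by simp
  have "energy q E F \<ge> 0" unfolding energy_def by (auto intro: sum_nonneg)
  have "d powr q \<le> (d + 1) powr q" and "1 \<le> (d + 1) powr q"
    using \<open>q > 0\<close> unfolding d_def by (auto intro: powr_mono2 ge_one_powr_ge_zero)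
  then have "1 + 2 * d powr q \<le> 3 * (d + 1) powr q" by simp
  then have "(1 + 2 * d powr q) * energy q E F \<le> 3 * (d + 1) powr q * energy q E F"
    using \<open>energy q E F \<ge> 0\<close> by (rule mult_right_mono)
  with energy_hatF_le[OF g F AB \<open>q > 0\<close>] show ?thesis
    unfolding flow_extension_const_def q_def d_def by linarith
qed

theorem lemma2p12:
  shows "\<exists>C :: nat \<Rightarrow> real \<Rightarrow> real.
    (\<forall>d. \<forall>p>1. C d p \<ge> 1) \<and>
    (\<forall>d. continuous_on {1<..} (C d)) \<and>
    (\<forall>d. \<exists>g :: real \<Rightarrow> real. continuous_on {1..} g \<and>
          (\<forall>p>1. g p = C d p powr (- (p / (p / (p - 1)))))) \<and>
    (\<forall>(V :: nat set) E A B F (p :: real).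
        p > 1 \<longrightarrow> is_graph V E \<longrightarrow> graph_connected V E \<longrightarrow>
        A \<subseteq> V \<longrightarrow> B \<subseteq> V \<longrightarrow> A \<noteq> {} \<longrightarrow> B \<noteq> {} \<longrightarrow> A \<inter> B = {} \<longrightarrow>
        is_unit_flow V E A B F \<longrightarrow>
        energy (p / (p - 1)) (hatE E A B) (hatF V E A B F)
          \<le> C (max_degree V E) p * energy (p / (p - 1)) E F)"
proof (intro exI[of _ flow_extension_const] conjI allI impI)
  show "flow_extension_const d p \<ge> 1" if "p > 1" for d p
    using flow_extension_const_ge_one[OF that] .
  show "continuous_on {1<..} (flow_extension_const d)" for d
    by (rule continuous_on_flow_extension_const)
  show "\<exists>g. continuous_on {1..} g \<and>
          (\<forall>p>1. g p = flow_extension_const d p powr (- (p / (p / (p - 1)))))" for d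
  proof (intro exI[of _ "\<lambda>p. 3 powr (1 - p) * (real d + 1) powr (- p)"] conjI allI impI)
    show "continuous_on {1..} (\<lambda>p. 3 powr (1 - p) * (real d + 1) powr (- p))"
      by (intro continuous_intros) auto
    show "3 powr (1 - p) * (real d + 1) powr (- p) = flow_extension_const d p powr (- (p / (p / (p - 1))))"
      if "p > 1" for p
      using flow_extension_const_powr_conjugate[OF that] by simp
  qed
next
  fix V :: "nat set" and E A B F and p :: real
  assume "p > 1" "is_graph V E" "A \<subseteq> V" "B \<subseteq> V" "is_unit_flow V E A B F"
  then show "energy (p / (p - 1)) (hatE E A B) (hatF V E A B F)
               \<le> flow_extension_const (max_degree V E) p * energy (p / (p - 1)) E F"
    unfolding is_unit_flow_def is_flow_def
    by (intro energy_hatF_le_flow_extension_const) auto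
qed

end
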